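(* Let $K$ be a field of characteristic zero, $R=K[X_1,\ldots,X_n]$, $R_{n-1}=K[X_1,\ldots,X_{n-1}]$, and let $M$ be a simple left module over the Weyl algebra $A_n(K)$ with $\mathrm{Ass}_R(M)=\{P\}$. Set $Q=P\cap R_{n-1}$. Then \[H_0(\partial_n;M)=0\implies P=QR,\qquad H_1(\partial_n;M)\ne0\implies P=QR.\]
   Context: $H_0(\partial_n;M)=M/\partial_nM$ and $H_1(\partial_n;M)=\ker(\partial_n\colon M\to M)$ (Koszul homology with respect to the single $K$-linear map $\partial_n$). *)

theory Defs
  imports Complex_Main "HOL-Library.Poly_Mapping"
begin

text \<open>The paper's variable X_i is our variable
  i-1, so R = K[X_1..X_n] is the set of polynomials involving only variables < n.\<close>

type_synonym 'k mpoly = "(nat \<Rightarrow>\<^sub>0 nat) \<Rightarrow>\<^sub>0 'k"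

definition polys_in :: "nat \<Rightarrow> 'k::comm_ring_1 mpoly set" where
  "polys_in n = {p. \<forall>m \<in> Poly_Mapping.keys p. Poly_Mapping.keys m \<subseteq> {..<n}}"

definition ideal_in :: "nat \<Rightarrow> 'k::comm_ring_1 mpoly set \<Rightarrow> bool" where
  "ideal_in n I \<longleftrightarrow> I \<subseteq> polys_in n \<and> 0 \<in> I \<and> (\<forall>a\<in>I. \<forall>b\<in>I. a + b \<in> I)
     \<and> (\<forall>r\<in>polys_in n. \<forall>a\<in>I. r * a \<in> I)"

definition prime_ideal_in :: "nat \<Rightarrow> 'k::comm_ring_1 mpoly set \<Rightarrow> bool" where
  "prime_ideal_in n P \<longleftrightarrow> ideal_in n P \<and> P \<noteq> polys_in n
     \<and> (\<forall>a\<in>polys_in n. \<forall>b\<in>polys_in n. a * b \<in> P \<longrightarrow> a \<in> P \<or> b \<in> P)"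

definition ideal_gen_in :: "nat \<Rightarrow> 'k::comm_ring_1 mpoly set \<Rightarrow> 'k mpoly set" where
  "ideal_gen_in n Q = {p. \<exists>F r. finite F \<and> F \<subseteq> Q \<and> (\<forall>q\<in>F. r q \<in> polys_in n)
                              \<and> p = (\<Sum>q\<in>F. r q * q)}"

text \<open>A left module over the Weyl algebra A_n(K): a K-module (scale) with operators
  xop i (multiplication by X_(i+1)) and dop i (action of the derivation d_(i+1)), i < n,
  satisfying the defining relations of A_n(K).\<close>

definition weyl_module ::
  "nat \<Rightarrow> ('k::comm_ring_1 \<Rightarrow> 'm::ab_group_add \<Rightarrow> 'm) \<Rightarrow> (nat \<Rightarrow> 'm \<Rightarrow> 'm) \<Rightarrow> (nat \<Rightarrow> 'm \<Rightarrow> 'm) \<Rightarrow> bool" where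
  "weyl_module n scale xop dop \<longleftrightarrow> module scale
    \<and> (\<forall>i<n. \<forall>u v. xop i (u + v) = xop i u + xop i v)
    \<and> (\<forall>i<n. \<forall>u v. dop i (u + v) = dop i u + dop i v)
    \<and> (\<forall>i<n. \<forall>c v. xop i (scale c v) = scale c (xop i v))
    \<and> (\<forall>i<n. \<forall>c v. dop i (scale c v) = scale c (dop i v))
    \<and> (\<forall>i<n. \<forall>j<n. \<forall>v. xop i (xop j v) = xop j (xop i v))
    \<and> (\<forall>i<n. \<forall>j<n. \<forall>v. dop i (dop j v) = dop j (dop i v))
    \<and> (\<forall>i<n. \<forall>j<n. \<forall>v. dop i (xop j v) - xop j (dop i v) = (if i = j then v else 0))"

definition weyl_submodule ::
  "nat \<Rightarrow> ('k \<Rightarrow> 'm::ab_group_add \<Rightarrow> 'm) \<Rightarrow> (nat \<Rightarrow> 'm \<Rightarrow> 'm) \<Rightarrow> (nat \<Rightarrow> 'm \<Rightarrow> 'm) \<Rightarrow> 'm set \<Rightarrow> bool" where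
  "weyl_submodule n scale xop dop N \<longleftrightarrow> 0 \<in> N \<and> (\<forall>u\<in>N. \<forall>v\<in>N. u + v \<in> N)
    \<and> (\<forall>c. \<forall>v\<in>N. scale c v \<in> N) \<and> (\<forall>i<n. \<forall>v\<in>N. xop i v \<in> N \<and> dop i v \<in> N)"

definition simple_weyl_module ::
  "nat \<Rightarrow> ('k::comm_ring_1 \<Rightarrow> 'm::ab_group_add \<Rightarrow> 'm) \<Rightarrow> (nat \<Rightarrow> 'm \<Rightarrow> 'm) \<Rightarrow> (nat \<Rightarrow> 'm \<Rightarrow> 'm) \<Rightarrow> bool" where
  "simple_weyl_module n scale xop dop \<longleftrightarrow> weyl_module n scale xop dop
    \<and> (\<exists>v::'m. v \<noteq> 0)
    \<and> (\<forall>N. weyl_submodule n scale xop dop N \<longrightarrow> N = {0} \<or> N = UNIV)"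

definition mono_act :: "nat \<Rightarrow> (nat \<Rightarrow> 'm \<Rightarrow> 'm) \<Rightarrow> (nat \<Rightarrow>\<^sub>0 nat) \<Rightarrow> 'm \<Rightarrow> 'm" where
  "mono_act n xop m = foldr (\<lambda>i f. (xop i ^^ Poly_Mapping.lookup m i) \<circ> f) [0..<n] id"

definition poly_act ::
  "nat \<Rightarrow> ('k::comm_ring_1 \<Rightarrow> 'm::ab_group_add \<Rightarrow> 'm) \<Rightarrow> (nat \<Rightarrow> 'm \<Rightarrow> 'm) \<Rightarrow> 'k mpoly \<Rightarrow> 'm \<Rightarrow> 'm" where
  "poly_act n scale xop p v = (\<Sum>m\<in>Poly_Mapping.keys p. scale (Poly_Mapping.lookup p m) (mono_act n xop m v))"

definition ann_in ::
  "nat \<Rightarrow> ('k::comm_ring_1 \<Rightarrow> 'm::ab_group_add \<Rightarrow> 'm) \<Rightarrow> (nat \<Rightarrow> 'm \<Rightarrow> 'm) \<Rightarrow> 'm \<Rightarrow> 'k mpoly set" where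
  "ann_in n scale xop v = {p \<in> polys_in n. poly_act n scale xop p v = 0}"

definition Ass_in ::
  "nat \<Rightarrow> ('k::comm_ring_1 \<Rightarrow> 'm::ab_group_add \<Rightarrow> 'm) \<Rightarrow> (nat \<Rightarrow> 'm \<Rightarrow> 'm) \<Rightarrow> 'k mpoly set set" where
  "Ass_in n scale xop = {P. prime_ideal_in n P \<and> (\<exists>v. P = ann_in n scale xop v)}"

end

theory Submission
  imports Defs
begin

text \<open>Write P = Ann(v) and d = d/dX_n. For f \<in> P the Leibniz rule
  [d, f^(m+1)] = (m+1) f^m (df/dX_n) shows that f acts locally nilpotently on the submodule
  generated by v, which is M by simplicity. Now let y \<noteq> 0 be such that P kills d y: a preimage
  of v under d if d is surjective, or an element of the kernel of d. If m is least with
  f^m y = 0, then f^m d y = 0 too, and the Leibniz rule leaves m (df/dX_n) f^(m-1) y = 0.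
  As the annihilator of any nonzero element of M has radical P, we get df/dX_n \<in> P. So P is
  stable under d/dX_n, and in characteristic zero such an ideal is extended from
  K[X_1..X_(n-1)]: the top X_n-coefficient of f \<in> P is (d/dX_n)^d f / d! \<in> P, and subtracting
  X_n^d times it lowers the X_n-degree.\<close>

section \<open>Polynomials and partial derivatives\<close>

lemma additive_sum:
  fixes f :: "'a::ab_group_add \<Rightarrow> 'b::ab_group_add"
  assumes "\<And>u v. f (u + v) = f u + f v"
  shows "f (sum g A) = (\<Sum>x\<in>A. f (g x))"
proof -
  have "f 0 = 0" using assms[of 0 0] by simp
  then show ?thesis by (induction A rule: infinite_finite_induct) (auto simp: assms)
qed

lemma poly_mapping_sum_single:
  "(p::'a \<Rightarrow>\<^sub>0 'b::comm_monoid_add) = (\<Sum>a\<in>Poly_Mapping.keys p. Poly_Mapping.single a (Poly_Mapping.lookup p a))"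
  by (rule poly_mapping_eqI) (auto simp: lookup_sum lookup_single when_def in_keys_iff)

lemma lookup_single_mult:
  fixes c :: "'b::comm_semiring_1"
  shows "Poly_Mapping.lookup (Poly_Mapping.single (a::'a::cancel_comm_monoid_add) c * p) (a + b)
    = c * Poly_Mapping.lookup p b"
proof -
  have "Poly_Mapping.single a c * p
      = (\<Sum>b\<in>Poly_Mapping.keys p. Poly_Mapping.single (a + b) (c * Poly_Mapping.lookup p b))"
    by (subst poly_mapping_sum_single[of p]) (simp add: sum_distrib_left mult_single)
  then show ?thesis by (simp add: lookup_sum lookup_single when_def in_keys_iff)
qed

lemma keys_plus_nat:
  "Poly_Mapping.keys ((a::'a \<Rightarrow>\<^sub>0 nat) + b) = Poly_Mapping.keys a \<union> Poly_Mapping.keys b"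
  by (auto simp: in_keys_iff lookup_add)

lemma polys_in_zero: "0 \<in> polys_in n"
  by (simp add: polys_in_def)

lemma polys_in_one: "1 \<in> polys_in n"
  by (simp add: polys_in_def)

lemma polys_in_add: "p \<in> polys_in n \<Longrightarrow> q \<in> polys_in n \<Longrightarrow> p + q \<in> polys_in n"
  unfolding polys_in_def using keys_add[of p q] by blast

lemma polys_in_mult: "p \<in> polys_in n \<Longrightarrow> q \<in> polys_in n \<Longrightarrow> p * q \<in> polys_in n"
  unfolding polys_in_def using keys_mult[of p q] by (force simp: keys_plus_nat)

lemma polys_in_power: "p \<in> polys_in n \<Longrightarrow> p ^ k \<in> polys_in n"
  by (induction k) (auto simp: polys_in_one polys_in_mult)

lemma prime_ideal_in_power_mem:
  assumes "prime_ideal_in n P" and "g \<in> polys_in n" and "g ^ N \<in> P"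
  shows "g \<in> P"
  using assms(3)
proof (induction N)
  case 0
  then have "polys_in n \<subseteq> P"
    using assms(1) unfolding prime_ideal_in_def ideal_in_def by (metis mult.right_neutral power_0 subsetI)
  with assms(1) show ?case unfolding prime_ideal_in_def ideal_in_def by blast
next
  case (Suc N)
  then have "g * g ^ N \<in> P" by simp
  then show ?case using Suc.IH assms(1,2) polys_in_power unfolding prime_ideal_in_def by blast
qed

text \<open>Terms with a_j = 0 vanish, so the truncated a - e_j in them is harmless.\<close>

definition pderiv_var :: "nat \<Rightarrow> 'k::comm_ring_1 mpoly \<Rightarrow> 'k mpoly" where
  "pderiv_var j p = (\<Sum>a\<in>Poly_Mapping.keys p.
     Poly_Mapping.single (a - Poly_Mapping.single j 1) (of_nat (Poly_Mapping.lookup a j) * Poly_Mapping.lookup p a))"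

lemma pderiv_var_polys_in:
  assumes "p \<in> polys_in n"
  shows "pderiv_var j p \<in> polys_in n"
  unfolding polys_in_def
proof (intro CollectI ballI)
  fix m assume "m \<in> Poly_Mapping.keys (pderiv_var j p)"
  then obtain a where a: "a \<in> Poly_Mapping.keys p" and "m = a - Poly_Mapping.single j 1"
    unfolding pderiv_var_def using keys_sum by (fastforce split: if_splits)
  then have "Poly_Mapping.keys m \<subseteq> Poly_Mapping.keys a"
    by (auto simp: in_keys_iff lookup_minus)
  then show "Poly_Mapping.keys m \<subseteq> {..<n}"
    using a assms unfolding polys_in_def by blast
qed

lemma lookup_pderiv_var:
  "Poly_Mapping.lookup (pderiv_var j p) m
     = of_nat (Poly_Mapping.lookup m j + 1) * Poly_Mapping.lookup p (m + Poly_Mapping.single j 1)"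
proof -
  let ?e = "Poly_Mapping.single j (1::nat)"
  let ?h = "\<lambda>a. of_nat (Poly_Mapping.lookup a j) * Poly_Mapping.lookup p a"
  have shift: "(?h a when a - ?e = m) = (if a = m + ?e then ?h a else 0)" for a
  proof (cases "Poly_Mapping.lookup a j = 0")
    case True
    then have "a \<noteq> m + ?e" by (auto simp: lookup_add)
    with True show ?thesis by (simp add: when_def)
  next
    case False
    then have "a - ?e = m \<longleftrightarrow> a = m + ?e"
      by (auto intro!: poly_mapping_eqI simp: lookup_add lookup_minus lookup_single when_def)
    then show ?thesis by (simp add: when_def)
  qed
  have "Poly_Mapping.lookup (pderiv_var j p) m = (\<Sum>a\<in>Poly_Mapping.keys p. ?h a when a - ?e = m)"
    by (simp add: pderiv_var_def lookup_sum lookup_single)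
  also have "\<dots> = ?h (m + ?e)"
    by (simp only: shift) (simp add: sum.delta in_keys_iff)
  finally show ?thesis by (simp add: lookup_add)
qed

lemma lookup_pderiv_var_iter:
  "of_nat (fact (Poly_Mapping.lookup m j)) * Poly_Mapping.lookup ((pderiv_var j ^^ k) p) m
     = (of_nat (fact (Poly_Mapping.lookup m j + k)) :: 'k::comm_ring_1)
         * Poly_Mapping.lookup p (m + Poly_Mapping.single j k)"
proof (induction k arbitrary: m)
  case 0
  then show ?case by simp
next
  case (Suc k)
  let ?e = "Poly_Mapping.single j (1::nat)"
  have lj: "Poly_Mapping.lookup (m + ?e) j = Suc (Poly_Mapping.lookup m j)"
    by (simp add: lookup_add)
  have fact_Suc: "of_nat (fact (Poly_Mapping.lookup m j)) * of_nat (Poly_Mapping.lookup m j + 1)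
      = (of_nat (fact (Poly_Mapping.lookup (m + ?e) j)) :: 'k)"
    unfolding lj by (simp add: algebra_simps)
  have "of_nat (fact (Poly_Mapping.lookup m j)) * Poly_Mapping.lookup ((pderiv_var j ^^ Suc k) p) m
     = of_nat (fact (Poly_Mapping.lookup (m + ?e) j)) * Poly_Mapping.lookup ((pderiv_var j ^^ k) p) (m + ?e)"
    by (simp only: funpow.simps comp_apply lookup_pderiv_var mult.assoc [symmetric] fact_Suc)
  also have "\<dots> = of_nat (fact (Poly_Mapping.lookup (m + ?e) j + k)) * Poly_Mapping.lookup p (m + ?e + Poly_Mapping.single j k)"
    by (rule Suc)
  also have "m + ?e + Poly_Mapping.single j k = m + Poly_Mapping.single j (Suc k)"
    by (simp only: add.assoc single_add[symmetric] plus_1_eq_Suc)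
  also have "Poly_Mapping.lookup (m + ?e) j + k = Poly_Mapping.lookup m j + Suc k"
    unfolding lj by simp
  finally show ?case .
qed

section \<open>Ideals stable under the derivation in the last variable\<close>

lemma ideal_gen_in_zero: "0 \<in> ideal_gen_in n Q"
  unfolding ideal_gen_in_def by (intro CollectI exI[of _ "{}"]) simp

lemma ideal_gen_in_multiple: "q \<in> Q \<Longrightarrow> r \<in> polys_in n \<Longrightarrow> r * q \<in> ideal_gen_in n Q"
  unfolding ideal_gen_in_def by (intro CollectI exI[of _ "{q}"] exI[of _ "\<lambda>_. r"]) simp

lemma ideal_gen_in_add:
  assumes "x \<in> ideal_gen_in n Q" and "y \<in> ideal_gen_in n Q"
  shows "x + y \<in> ideal_gen_in n Q"
proof -
  obtain F1 r1 where F1: "finite F1" "F1 \<subseteq> Q" "\<forall>q\<in>F1. r1 q \<in> polys_in n" "x = (\<Sum>q\<in>F1. r1 q * q)"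
    using assms(1) unfolding ideal_gen_in_def by blast
  obtain F2 r2 where F2: "finite F2" "F2 \<subseteq> Q" "\<forall>q\<in>F2. r2 q \<in> polys_in n" "y = (\<Sum>q\<in>F2. r2 q * q)"
    using assms(2) unfolding ideal_gen_in_def by blast
  define r where "r q = (if q \<in> F1 then r1 q else 0) + (if q \<in> F2 then r2 q else 0)" for q
  have fin: "finite (F1 \<union> F2)" using F1(1) F2(1) by simp
  have "(\<Sum>q\<in>F1 \<union> F2. r q * q)
      = (\<Sum>q\<in>F1 \<union> F2. if q \<in> F1 then r1 q * q else 0) + (\<Sum>q\<in>F1 \<union> F2. if q \<in> F2 then r2 q * q else 0)"
    unfolding r_def distrib_right sum.distrib [symmetric] by (intro sum.cong) simp_all
  also have "\<dots> = (\<Sum>q\<in>(F1 \<union> F2) \<inter> F1. r1 q * q) + (\<Sum>q\<in>(F1 \<union> F2) \<inter> F2. r2 q * q)"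
    by (simp only: sum.inter_restrict[OF fin])
  also have "\<dots> = x + y"
    using F1(4) F2(4) by (simp add: Int_absorb1)
  finally have "x + y = (\<Sum>q\<in>F1 \<union> F2. r q * q)" ..
  moreover have "\<forall>q\<in>F1 \<union> F2. r q \<in> polys_in n"
    using F1(3) F2(3) by (simp add: r_def polys_in_add polys_in_zero)
  ultimately show ?thesis
    unfolding ideal_gen_in_def using F1 F2 by (intro CollectI exI[of _ "F1 \<union> F2"] exI[of _ r]) simp
qed

lemma ideal_gen_in_subset:
  assumes "ideal_in n P" and "Q \<subseteq> P"
  shows "ideal_gen_in n Q \<subseteq> P"
proof
  fix x assume "x \<in> ideal_gen_in n Q"
  then obtain F r where F: "finite F" "F \<subseteq> Q" "\<forall>q\<in>F. r q \<in> polys_in n" "x = (\<Sum>q\<in>F. r q * q)"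
    unfolding ideal_gen_in_def by blast
  have "(\<Sum>q\<in>F. r q * q) \<in> P" using F(1-3)
  proof (induction F rule: finite_induct)
    case (insert a F)
    then have "r a * a \<in> P" using assms unfolding ideal_in_def by blast
    with insert show ?case using assms(1) unfolding ideal_in_def by simp
  qed (use assms(1) in \<open>simp add: ideal_in_def\<close>)
  then show "x \<in> P" using F by simp
qed

lemma lookup_pderiv_var_iter_top:
  fixes f :: "'k::field_char_0 mpoly"
  assumes "\<forall>m\<in>Poly_Mapping.keys f. Poly_Mapping.lookup m j \<le> d"
  shows "Poly_Mapping.lookup ((pderiv_var j ^^ d) f) m
    = (if Poly_Mapping.lookup m j = 0 then of_nat (fact d) * Poly_Mapping.lookup f (m + Poly_Mapping.single j d) else 0)"
proof -
  have iter: "of_nat (fact (Poly_Mapping.lookup m j)) * Poly_Mapping.lookup ((pderiv_var j ^^ d) f) m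
      = of_nat (fact (Poly_Mapping.lookup m j + d)) * Poly_Mapping.lookup f (m + Poly_Mapping.single j d)"
    by (rule lookup_pderiv_var_iter)
  show ?thesis
  proof (cases "Poly_Mapping.lookup m j = 0")
    case True
    with iter show ?thesis by simp
  next
    case False
    then have "m + Poly_Mapping.single j d \<notin> Poly_Mapping.keys f"
      using assms by (force simp: lookup_add)
    with iter False show ?thesis by (simp add: in_keys_iff)
  qed
qed

lemma top_coefficient_polys_in:
  fixes f :: "'k::field_char_0 mpoly"
  assumes f: "f \<in> polys_in (Suc k)" and deg: "\<forall>m\<in>Poly_Mapping.keys f. Poly_Mapping.lookup m k \<le> d"
  shows "(pderiv_var k ^^ d) f \<in> polys_in k"
  unfolding polys_in_def
proof (intro CollectI ballI subsetI)
  fix m x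
  assume m: "m \<in> Poly_Mapping.keys ((pderiv_var k ^^ d) f)" and x: "x \<in> Poly_Mapping.keys m"
  have mk: "Poly_Mapping.lookup m k = 0" and "m + Poly_Mapping.single k d \<in> Poly_Mapping.keys f"
    using m lookup_pderiv_var_iter_top[OF deg, of m] by (auto simp: in_keys_iff split: if_splits)
  then have "Poly_Mapping.keys (m + Poly_Mapping.single k d) \<subseteq> {..<Suc k}"
    using f unfolding polys_in_def by blast
  then have "x < Suc k"
    using x by (auto simp: keys_plus_nat)
  moreover have "x \<noteq> k"
    using x mk by (auto simp: in_keys_iff)
  ultimately show "x \<in> {..<k}" by simp
qed

lemma degree_below_after_top_coefficient:
  fixes f :: "'k::field_char_0 mpoly"
  assumes deg: "\<forall>m\<in>Poly_Mapping.keys f. Poly_Mapping.lookup m k \<le> d"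
  defines "t \<equiv> Poly_Mapping.single (Poly_Mapping.single k d) (inverse (of_nat (fact d))) * (pderiv_var k ^^ d) f"
  shows "\<forall>m\<in>Poly_Mapping.keys (f - t). Poly_Mapping.lookup m k < d"
proof (intro ballI, rule ccontr)
  fix m
  assume m: "m \<in> Poly_Mapping.keys (f - t)" and "\<not> Poly_Mapping.lookup m k < d"
  define b where "b = m - Poly_Mapping.single k d"
  have mb: "m = Poly_Mapping.single k d + b"
    using \<open>\<not> _ < d\<close> by (intro poly_mapping_eqI) (auto simp: b_def lookup_add lookup_minus lookup_single when_def)
  have bk: "Poly_Mapping.lookup b k = Poly_Mapping.lookup m k - d"
    by (simp add: b_def lookup_minus)
  have "Poly_Mapping.lookup t m = inverse (of_nat (fact d)) * Poly_Mapping.lookup ((pderiv_var k ^^ d) f) b"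
    unfolding t_def mb by (rule lookup_single_mult)
  also have "\<dots> = Poly_Mapping.lookup f m"
  proof (cases "Poly_Mapping.lookup m k = d")
    case True
    then have "Poly_Mapping.lookup b k = 0" using bk by simp
    moreover have "b + Poly_Mapping.single k d = m" using mb by (simp add: add.commute)
    ultimately show ?thesis by (simp add: lookup_pderiv_var_iter_top[OF deg])
  next
    case False
    then have "Poly_Mapping.lookup b k \<noteq> 0" using bk \<open>\<not> _ < d\<close> by simp
    moreover have "m \<notin> Poly_Mapping.keys f" using False \<open>\<not> _ < d\<close> deg by fastforce
    ultimately show ?thesis by (simp add: lookup_pderiv_var_iter_top[OF deg] in_keys_iff)
  qed
  finally show False using m by (simp add: in_keys_iff lookup_minus)
qed

lemma pderiv_closed_ideal_subset_ideal_gen: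
  fixes P :: "'k::field_char_0 mpoly set"
  assumes P: "ideal_in (Suc k) P" and closed: "\<forall>f\<in>P. pderiv_var k f \<in> P"
  shows "f \<in> P \<Longrightarrow> \<forall>m\<in>Poly_Mapping.keys f. Poly_Mapping.lookup m k < d
    \<Longrightarrow> f \<in> ideal_gen_in (Suc k) (P \<inter> polys_in k)"
proof (induction d arbitrary: f)
  case 0
  then have "f = 0" by (intro poly_mapping_eqI) (auto simp: in_keys_iff)
  then show ?case by (simp add: ideal_gen_in_zero)
next
  case (Suc d)
  let ?c = "(pderiv_var k ^^ d) f"
  define r :: "'k mpoly" where "r = Poly_Mapping.single (Poly_Mapping.single k d) (inverse (of_nat (fact d)))"
  have f: "f \<in> polys_in (Suc k)" and deg: "\<forall>m\<in>Poly_Mapping.keys f. Poly_Mapping.lookup m k \<le> d"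
    using Suc.prems P by (auto simp: ideal_in_def less_Suc_eq_le)
  have "?c \<in> P"
    using Suc.prems(1) closed by (induction d) auto
  moreover have "?c \<in> polys_in k"
    using top_coefficient_polys_in[OF f deg] .
  moreover have r: "r \<in> polys_in (Suc k)" "- r \<in> polys_in (Suc k)"
    by (auto simp: r_def polys_in_def)
  ultimately have t: "r * ?c \<in> ideal_gen_in (Suc k) (P \<inter> polys_in k)" "- r * ?c \<in> P"
    using P by (auto simp: ideal_gen_in_multiple ideal_in_def)
  have "f - r * ?c \<in> P"
    using t(2) Suc.prems(1) P unfolding ideal_in_def by (metis minus_mult_left uminus_add_conv_diff add.commute)
  moreover have "\<forall>m\<in>Poly_Mapping.keys (f - r * ?c). Poly_Mapping.lookup m k < d"
    unfolding r_def by (rule degree_below_after_top_coefficient[OF deg])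
  ultimately have "f - r * ?c \<in> ideal_gen_in (Suc k) (P \<inter> polys_in k)"
    by (rule Suc.IH)
  then show ?case
    using ideal_gen_in_add[OF _ t(1)] by fastforce
qed

lemma pderiv_closed_ideal_eq_ideal_gen:
  fixes P :: "'k::field_char_0 mpoly set"
  assumes P: "ideal_in (Suc k) P" and closed: "\<forall>f\<in>P. pderiv_var k f \<in> P"
  shows "P = ideal_gen_in (Suc k) (P \<inter> polys_in k)"
proof
  show "P \<subseteq> ideal_gen_in (Suc k) (P \<inter> polys_in k)"
  proof
    fix f assume "f \<in> P"
    let ?d = "Suc (Max (insert 0 ((\<lambda>m. Poly_Mapping.lookup m k) ` Poly_Mapping.keys f)))"
    have "\<forall>m\<in>Poly_Mapping.keys f. Poly_Mapping.lookup m k < ?d"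
      by (auto simp: less_Suc_eq_le)
    with \<open>f \<in> P\<close> show "f \<in> ideal_gen_in (Suc k) (P \<inter> polys_in k)"
      by (rule pderiv_closed_ideal_subset_ideal_gen[OF P closed])
  qed
  show "ideal_gen_in (Suc k) (P \<inter> polys_in k) \<subseteq> P"
    using P by (simp add: ideal_gen_in_subset)
qed

section \<open>Polynomials acting on a Weyl module\<close>

definition mono_act_on :: "(nat \<Rightarrow> 'm \<Rightarrow> 'm) \<Rightarrow> nat list \<Rightarrow> (nat \<Rightarrow>\<^sub>0 nat) \<Rightarrow> 'm \<Rightarrow> 'm" where
  "mono_act_on xop L m = foldr (\<lambda>i f. (xop i ^^ Poly_Mapping.lookup m i) \<circ> f) L id"

lemma mono_act_on_Nil [simp]: "mono_act_on xop [] m v = v"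
  by (simp add: mono_act_on_def)

lemma mono_act_on_Cons [simp]:
  "mono_act_on xop (i # L) m v = (xop i ^^ Poly_Mapping.lookup m i) (mono_act_on xop L m v)"
  by (simp add: mono_act_on_def)

lemma mono_act_eq_mono_act_on: "mono_act n xop m = mono_act_on xop [0..<n] m"
  by (simp add: mono_act_def mono_act_on_def)

lemma mono_act_on_cong:
  "(\<And>i. i \<in> set L \<Longrightarrow> Poly_Mapping.lookup a i = Poly_Mapping.lookup b i)
    \<Longrightarrow> mono_act_on xop L a v = mono_act_on xop L b v"
  by (induction L arbitrary: v) auto

locale weyl_mod =
  fixes n :: nat
    and scale :: "'k::comm_ring_1 \<Rightarrow> 'm::ab_group_add \<Rightarrow> 'm"
    and xop dop :: "nat \<Rightarrow> 'm \<Rightarrow> 'm"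
  assumes weyl: "weyl_module n scale xop dop"
begin

sublocale module scale
  using weyl unfolding weyl_module_def by (elim conjE)

lemma xop_add: "i < n \<Longrightarrow> xop i (u + v) = xop i u + xop i v"
  using weyl unfolding weyl_module_def by simp

lemma dop_add: "i < n \<Longrightarrow> dop i (u + v) = dop i u + dop i v"
  using weyl unfolding weyl_module_def by simp

lemma xop_scale: "i < n \<Longrightarrow> xop i (scale c v) = scale c (xop i v)"
  using weyl unfolding weyl_module_def by simp

lemma dop_scale: "i < n \<Longrightarrow> dop i (scale c v) = scale c (dop i v)"
  using weyl unfolding weyl_module_def by simp

lemma xop_commute: "i < n \<Longrightarrow> j < n \<Longrightarrow> xop i (xop j v) = xop j (xop i v)"
  using weyl unfolding weyl_module_def by simp

lemma dop_xop: "i < n \<Longrightarrow> j < n \<Longrightarrow> dop i (xop j v) = xop j (dop i v) + (if i = j then v else 0)"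
proof -
  assume "i < n" "j < n"
  then have "dop i (xop j v) - xop j (dop i v) = (if i = j then v else 0)"
    using weyl unfolding weyl_module_def by simp
  then show ?thesis by (simp add: algebra_simps)
qed

lemma xop_zero: "i < n \<Longrightarrow> xop i 0 = 0"
  using xop_add[of i 0 0] by simp

lemma dop_zero: "i < n \<Longrightarrow> dop i 0 = 0"
  using dop_add[of i 0 0] by simp

lemma dop_sum: "i < n \<Longrightarrow> dop i (sum g A) = (\<Sum>x\<in>A. dop i (g x))"
  by (rule additive_sum) (simp add: dop_add)

lemma xop_sum: "i < n \<Longrightarrow> xop i (sum g A) = (\<Sum>x\<in>A. xop i (g x))"
  by (rule additive_sum) (simp add: xop_add)

lemma xop_pow_add: "i < n \<Longrightarrow> (xop i ^^ k) (u + v) = (xop i ^^ k) u + (xop i ^^ k) v"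
  by (induction k) (auto simp: xop_add)

lemma xop_pow_zero: "i < n \<Longrightarrow> (xop i ^^ k) 0 = 0"
  by (induction k) (auto simp: xop_zero)

lemma xop_pow_scale: "i < n \<Longrightarrow> (xop i ^^ k) (scale c v) = scale c ((xop i ^^ k) v)"
  by (induction k) (auto simp: xop_scale)

lemma xop_pow_commute:
  "i < n \<Longrightarrow> j < n \<Longrightarrow> (xop i ^^ k) ((xop j ^^ l) v) = (xop j ^^ l) ((xop i ^^ k) v)"
proof -
  assume ij: "i < n" "j < n"
  then have "(xop i ^^ k) (xop j v) = xop j ((xop i ^^ k) v)" for v
    by (induction k) (auto simp: xop_commute)
  then show ?thesis by (induction l) auto
qed

lemma dop_xop_pow:
  assumes "i < n" "j < n"
  shows "dop j ((xop i ^^ k) v)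
    = (xop i ^^ k) (dop j v) + (if i = j then scale (of_nat k) ((xop i ^^ (k - 1)) v) else 0)"
proof (induction k)
  case (Suc k)
  show ?case
  proof (cases "i = j")
    case True
    have "dop j ((xop i ^^ Suc k) v) = xop i (dop j ((xop i ^^ k) v)) + (xop i ^^ k) v"
      using assms True by (simp add: dop_xop)
    also have "\<dots> = (xop i ^^ Suc k) (dop j v) + scale (of_nat k) ((xop i ^^ k) v) + (xop i ^^ k) v"
      using Suc assms True by (cases k) (auto simp: xop_add xop_scale xop_zero)
    finally show ?thesis
      using True by (simp add: scale_left_distrib add.assoc)
  qed (use Suc assms in \<open>simp add: dop_xop\<close>)
qed simp

lemma mono_act_on_add:
  "set L \<subseteq> {..<n} \<Longrightarrow> mono_act_on xop L m (u + v) = mono_act_on xop L m u + mono_act_on xop L m v"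
  by (induction L) (auto simp: xop_pow_add)

lemma mono_act_on_scale:
  "set L \<subseteq> {..<n} \<Longrightarrow> mono_act_on xop L m (scale c v) = scale c (mono_act_on xop L m v)"
  by (induction L) (auto simp: xop_pow_scale)

lemma mono_act_on_xop_pow:
  "set L \<subseteq> {..<n} \<Longrightarrow> j < n \<Longrightarrow> mono_act_on xop L m ((xop j ^^ k) v) = (xop j ^^ k) (mono_act_on xop L m v)"
  by (induction L) (auto simp: xop_pow_commute)

lemma mono_act_on_plus:
  "set L \<subseteq> {..<n} \<Longrightarrow> mono_act_on xop L (a + b) v = mono_act_on xop L a (mono_act_on xop L b v)"
  by (induction L arbitrary: v) (auto simp: mono_act_on_xop_pow lookup_add funpow_add)

lemma dop_mono_act_on:
  assumes "set L \<subseteq> {..<n}" "distinct L" "j < n"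
  shows "dop j (mono_act_on xop L m v) = mono_act_on xop L m (dop j v)
    + (if j \<in> set L then scale (of_nat (Poly_Mapping.lookup m j)) (mono_act_on xop L (m - Poly_Mapping.single j 1) v) else 0)"
  using assms(1,2)
proof (induction L arbitrary: v)
  case (Cons i L)
  have i: "i < n" using Cons.prems by auto
  let ?e = "Poly_Mapping.single j 1" and ?y = "mono_act_on xop L m v"
  have "dop j (mono_act_on xop (i # L) m v)
      = (xop i ^^ Poly_Mapping.lookup m i) (dop j ?y)
        + (if i = j then scale (of_nat (Poly_Mapping.lookup m i)) ((xop i ^^ (Poly_Mapping.lookup m i - 1)) ?y) else 0)"
    using dop_xop_pow[OF i assms(3)] by simp
  also have "\<dots> = mono_act_on xop (i # L) m (dop j v)
      + (if j \<in> set L then scale (of_nat (Poly_Mapping.lookup m j)) ((xop i ^^ Poly_Mapping.lookup m i) (mono_act_on xop L (m - ?e) v)) else 0)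
      + (if i = j then scale (of_nat (Poly_Mapping.lookup m i)) ((xop i ^^ (Poly_Mapping.lookup m i - 1)) ?y) else 0)"
    using Cons i by (auto simp: xop_pow_add xop_pow_scale xop_pow_zero)
  also have "\<dots> = mono_act_on xop (i # L) m (dop j v)
      + (if j \<in> set (i # L) then scale (of_nat (Poly_Mapping.lookup m j)) (mono_act_on xop (i # L) (m - ?e) v) else 0)"
  proof (cases "i = j")
    case True
    then have "j \<notin> set L" using Cons.prems by auto
    then have "mono_act_on xop L (m - ?e) v = ?y"
      by (intro mono_act_on_cong) (auto simp: lookup_minus lookup_single when_def)
    with True \<open>j \<notin> set L\<close> show ?thesis by (simp add: lookup_minus)
  qed (auto simp: lookup_minus lookup_single)
  finally show ?case .
qed simp

abbreviation mon :: "(nat \<Rightarrow>\<^sub>0 nat) \<Rightarrow> 'm \<Rightarrow> 'm" where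
  "mon m \<equiv> mono_act n xop m"

abbreviation act :: "'k mpoly \<Rightarrow> 'm \<Rightarrow> 'm" where
  "act p \<equiv> poly_act n scale xop p"

lemma mono_act_add: "mon m (u + v) = mon m u + mon m v"
  unfolding mono_act_eq_mono_act_on by (simp add: mono_act_on_add atLeast0LessThan)

lemma mono_act_scale: "mon m (scale c v) = scale c (mon m v)"
  unfolding mono_act_eq_mono_act_on by (simp add: mono_act_on_scale atLeast0LessThan)

lemma mono_act_xop: "j < n \<Longrightarrow> mon m (xop j v) = xop j (mon m v)"
  unfolding mono_act_eq_mono_act_on using mono_act_on_xop_pow[of "[0..<n]" j m 1] by (simp add: atLeast0LessThan)

lemma mono_act_plus: "mon (a + b) v = mon a (mon b v)"
  unfolding mono_act_eq_mono_act_on by (simp add: mono_act_on_plus atLeast0LessThan)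

lemma mono_act_zero_exponent: "mon 0 v = v"
proof -
  have "mono_act_on xop L 0 v = v" for L by (induction L) auto
  then show ?thesis unfolding mono_act_eq_mono_act_on .
qed

lemma dop_mono_act:
  "j < n \<Longrightarrow> dop j (mon m v)
     = mon m (dop j v) + scale (of_nat (Poly_Mapping.lookup m j)) (mon (m - Poly_Mapping.single j 1) v)"
  unfolding mono_act_eq_mono_act_on by (simp add: dop_mono_act_on atLeast0LessThan)

lemma mono_act_sum: "mon m (sum g A) = (\<Sum>x\<in>A. mon m (g x))"
  by (rule additive_sum) (rule mono_act_add)

lemma poly_act_superset_keys:
  "finite A \<Longrightarrow> Poly_Mapping.keys p \<subseteq> A \<Longrightarrow> act p v = (\<Sum>m\<in>A. scale (Poly_Mapping.lookup p m) (mon m v))"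
  unfolding poly_act_def by (rule sum.mono_neutral_left) (auto simp: in_keys_iff)

lemma poly_act_add_poly: "act (p + q) v = act p v + act q v"
proof -
  let ?A = "Poly_Mapping.keys p \<union> Poly_Mapping.keys q"
  have "act (p + q) v = (\<Sum>m\<in>?A. scale (Poly_Mapping.lookup (p + q) m) (mon m v))"
    by (rule poly_act_superset_keys) (auto simp: keys_add)
  also have "\<dots> = (\<Sum>m\<in>?A. scale (Poly_Mapping.lookup p m) (mon m v)) + (\<Sum>m\<in>?A. scale (Poly_Mapping.lookup q m) (mon m v))"
    by (simp add: lookup_add scale_left_distrib sum.distrib)
  also have "\<dots> = act p v + act q v"
    by (simp add: poly_act_superset_keys[of ?A])
  finally show ?thesis .
qed

lemma poly_act_zero_poly: "act 0 v = 0"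
  by (simp add: poly_act_def)

lemma poly_act_sum_poly: "act (sum g A) v = (\<Sum>x\<in>A. act (g x) v)"
  by (induction A rule: infinite_finite_induct) (auto simp: poly_act_zero_poly poly_act_add_poly)

lemma poly_act_single: "act (Poly_Mapping.single a c) v = scale c (mon a v)"
  by (subst poly_act_superset_keys[of "{a}"]) auto

lemma poly_act_add: "act p (u + v) = act p u + act p v"
  by (simp add: poly_act_def mono_act_add scale_right_distrib sum.distrib)

lemma poly_act_zero: "act p 0 = 0"
  using poly_act_add[of p 0 0] by simp

lemma poly_act_scale: "act p (scale c v) = scale c (act p v)"
  by (simp add: poly_act_def mono_act_scale scale_sum_right mult.commute)

lemma poly_act_xop: "j < n \<Longrightarrow> act p (xop j v) = xop j (act p v)"
  by (simp add: poly_act_def mono_act_xop xop_sum xop_scale)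

lemma poly_act_mult: "act (p * q) v = act p (act q v)"
proof -
  let ?lp = "Poly_Mapping.lookup p" and ?lq = "Poly_Mapping.lookup q"
  have "p * q = (\<Sum>a\<in>Poly_Mapping.keys p. \<Sum>b\<in>Poly_Mapping.keys q.
      Poly_Mapping.single a (?lp a) * Poly_Mapping.single b (?lq b))"
    by (subst poly_mapping_sum_single[of p], subst poly_mapping_sum_single[of q])
      (simp add: sum_distrib_left sum_distrib_right sum.swap[of _ "Poly_Mapping.keys q"])
  then have "act (p * q) v = (\<Sum>a\<in>Poly_Mapping.keys p. \<Sum>b\<in>Poly_Mapping.keys q. scale (?lp a * ?lq b) (mon (a + b) v))"
    by (simp add: poly_act_sum_poly mult_single poly_act_single)
  also have "\<dots> = act p (act q v)"
    by (simp add: poly_act_def mono_act_sum mono_act_scale scale_sum_right mono_act_plus)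
  finally show ?thesis .
qed

lemma poly_act_one: "act 1 v = v"
proof -
  have "(1::'k mpoly) = Poly_Mapping.single 0 1" by simp
  then show ?thesis
    using poly_act_single[of 0 1 v] by (simp add: mono_act_zero_exponent del: single_one)
qed

lemma poly_act_power_Suc: "act (f ^ Suc k) v = act (f ^ k) (act f v)"
  by (simp only: power_Suc2 poly_act_mult)

lemma dop_poly_act: "j < n \<Longrightarrow> dop j (act p v) = act p (dop j v) + act (pderiv_var j p) v"
proof -
  assume j: "j < n"
  let ?lp = "Poly_Mapping.lookup p" and ?e = "Poly_Mapping.single j (1::nat)"
  have "dop j (act p v) = (\<Sum>a\<in>Poly_Mapping.keys p. scale (?lp a) (mon a (dop j v))
      + scale (?lp a) (scale (of_nat (Poly_Mapping.lookup a j)) (mon (a - ?e) v)))"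
    by (simp add: poly_act_def dop_sum j dop_scale dop_mono_act scale_right_distrib)
  also have "\<dots> = act p (dop j v) + (\<Sum>a\<in>Poly_Mapping.keys p.
      scale (of_nat (Poly_Mapping.lookup a j) * ?lp a) (mon (a - ?e) v))"
    by (simp add: sum.distrib poly_act_def mult.commute)
  also have "(\<Sum>a\<in>Poly_Mapping.keys p. scale (of_nat (Poly_Mapping.lookup a j) * ?lp a) (mon (a - ?e) v))
      = act (pderiv_var j p) v"
    by (simp add: pderiv_var_def poly_act_sum_poly poly_act_single)
  finally show ?thesis .
qed

lemma dop_poly_act_power:
  assumes j: "j < n"
  shows "dop j (act (f ^ Suc k) v)
    = act (f ^ Suc k) (dop j v) + scale (of_nat (Suc k)) (act (f ^ k * pderiv_var j f) v)"
proof (induction k arbitrary: v)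
  case 0
  then show ?case using j by (simp add: dop_poly_act)
next
  case (Suc k)
  let ?g = "act (f ^ Suc k * pderiv_var j f) v"
  have "dop j (act (f ^ Suc (Suc k)) v) = dop j (act f (act (f ^ Suc k) v))"
    by (simp only: power_Suc[of f "Suc k"] poly_act_mult)
  also have "\<dots> = act f (act (f ^ Suc k) (dop j v) + scale (of_nat (Suc k)) (act (f ^ k * pderiv_var j f) v))
      + act (pderiv_var j f) (act (f ^ Suc k) v)"
    using Suc j by (simp add: dop_poly_act)
  also have "\<dots> = act (f ^ Suc (Suc k)) (dop j v) + scale (of_nat (Suc k)) ?g + ?g"
    by (simp add: poly_act_add poly_act_scale poly_act_mult[symmetric] ac_simps)
  also have "\<dots> = act (f ^ Suc (Suc k)) (dop j v) + scale (of_nat (Suc (Suc k))) ?g"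
    using scale_left_distrib[of 1 "of_nat (Suc k)" ?g] by (simp only: of_nat_Suc[of "Suc k"] scale_one ac_simps)
  finally show ?case .
qed

inductive_set cyclic_submodule :: "'m \<Rightarrow> 'm set" for w where
  generator: "w \<in> cyclic_submodule w"
| zero: "0 \<in> cyclic_submodule w"
| add: "u \<in> cyclic_submodule w \<Longrightarrow> v \<in> cyclic_submodule w \<Longrightarrow> u + v \<in> cyclic_submodule w"
| scale: "u \<in> cyclic_submodule w \<Longrightarrow> scale c u \<in> cyclic_submodule w"
| xop: "i < n \<Longrightarrow> u \<in> cyclic_submodule w \<Longrightarrow> xop i u \<in> cyclic_submodule w"
| dop: "i < n \<Longrightarrow> u \<in> cyclic_submodule w \<Longrightarrow> dop i u \<in> cyclic_submodule w"

lemma weyl_submodule_cyclic_submodule: "weyl_submodule n scale xop dop (cyclic_submodule w)"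
  unfolding weyl_submodule_def by (auto intro: cyclic_submodule.intros)

lemma cyclic_submodule_killed_by_power:
  assumes fw: "act f w = 0" and y: "y \<in> cyclic_submodule w"
  shows "\<exists>N. act (f ^ N) y = 0"
  using y
proof induction
  case generator
  then show ?case using fw by (intro exI[of _ 1]) simp
next
  case zero
  then show ?case by (auto simp: poly_act_zero)
next
  case (add u v)
  then obtain N1 N2 where "act (f ^ N1) u = 0" "act (f ^ N2) v = 0" by blast
  then have "act (f ^ (N2 + N1)) u = 0" "act (f ^ (N1 + N2)) v = 0"
    by (simp_all add: power_add poly_act_mult poly_act_zero)
  then show ?case by (intro exI[of _ "N1 + N2"]) (simp add: poly_act_add add.commute)
next
  case (scale u c)
  then show ?case by (metis poly_act_scale scale_zero_right)
next
  case (xop i u)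
  then show ?case by (metis poly_act_xop xop_zero)
next
  case (dop i u)
  then obtain N where N: "act (f ^ N) u = 0" by blast
  have "act (f ^ Suc N) u = 0"
    using N by (simp add: poly_act_mult poly_act_zero)
  moreover have "dop i (act (f ^ Suc N) u)
      = act (f ^ Suc N) (dop i u) + scale (of_nat (Suc N)) (act (pderiv_var i f) (act (f ^ N) u))"
    using dop_poly_act_power[OF dop(1), of f N u] by (simp only: mult.commute[of "f ^ N"] poly_act_mult)
  ultimately have "act (f ^ Suc N) (dop i u) = 0"
    using N dop(1) by (simp add: poly_act_zero dop_zero)
  then show ?case by blast
qed

lemma ann_in_zero: "ann_in n scale xop 0 = polys_in n"
  by (auto simp: ann_in_def poly_act_zero)

lemma ann_in_prime_nonzero:
  assumes "prime_ideal_in n P" and "P = ann_in n scale xop v"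
  shows "v \<noteq> 0"
  using assms ann_in_zero unfolding prime_ideal_in_def by auto

end

section \<open>Simple Weyl modules\<close>

locale simple_weyl_mod =
  fixes n :: nat
    and scale :: "'k::field_char_0 \<Rightarrow> 'm::ab_group_add \<Rightarrow> 'm"
    and xop dop :: "nat \<Rightarrow> 'm \<Rightarrow> 'm"
  assumes simple: "simple_weyl_module n scale xop dop"

sublocale simple_weyl_mod \<subseteq> weyl_mod
  by unfold_locales (use simple in \<open>simp add: simple_weyl_module_def\<close>)

context simple_weyl_mod
begin

lemma cyclic_submodule_eq_UNIV: "w \<noteq> 0 \<Longrightarrow> cyclic_submodule w = UNIV"
  using simple weyl_submodule_cyclic_submodule[of w] cyclic_submodule.generator[of w]
  unfolding simple_weyl_module_def by blast

lemma prime_ann_in_mem_if_kills: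
  assumes P: "prime_ideal_in n P" "P = ann_in n scale xop v"
    and y: "y \<noteq> 0" and g: "g \<in> polys_in n" "act g y = 0"
  shows "g \<in> P"
proof -
  have "v \<in> cyclic_submodule y"
    using cyclic_submodule_eq_UNIV[OF y] by simp
  then obtain N where "act (g ^ N) v = 0"
    using cyclic_submodule_killed_by_power[OF g(2)] by blast
  then have "g ^ N \<in> P"
    using P(2) polys_in_power[OF g(1)] by (simp add: ann_in_def)
  then show ?thesis
    using prime_ideal_in_power_mem[OF P(1) g(1)] by blast
qed

lemma pderiv_var_mem_prime_ann_in:
  assumes P: "prime_ideal_in n P" "P = ann_in n scale xop v"
    and j: "j < n" and y: "y \<noteq> 0" and dy: "P \<subseteq> ann_in n scale xop (dop j y)"
    and f: "f \<in> P"
  shows "pderiv_var j f \<in> P"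
proof -
  have fR: "f \<in> polys_in n" and fv: "act f v = 0"
    using f P(2) by (auto simp: ann_in_def)
  have "y \<in> cyclic_submodule v"
    using cyclic_submodule_eq_UNIV[OF ann_in_prime_nonzero[OF P]] by simp
  then have ex: "\<exists>N. act (f ^ N) y = 0"
    by (rule cyclic_submodule_killed_by_power[OF fv])
  define m where "m = (LEAST N. act (f ^ N) y = 0)"
  have m: "act (f ^ m) y = 0"
    unfolding m_def by (rule LeastI_ex[OF ex])
  with y obtain k where k: "m = Suc k"
    by (cases m) (auto simp: poly_act_one)
  have nz: "act (f ^ k) y \<noteq> 0"
    using not_less_Least[of k "\<lambda>N. act (f ^ N) y = 0"] k unfolding m_def by auto
  have "act f (dop j y) = 0"
    using f dy by (auto simp: ann_in_def)
  then have "act (f ^ Suc k) (dop j y) = 0"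
    by (simp only: poly_act_power_Suc poly_act_zero)
  moreover have "dop j (act (f ^ Suc k) y)
      = act (f ^ Suc k) (dop j y) + scale (of_nat (Suc k)) (act (pderiv_var j f) (act (f ^ k) y))"
    using dop_poly_act_power[OF j, of f k y] by (simp only: mult.commute[of "f ^ k"] poly_act_mult)
  ultimately have "scale (of_nat (Suc k)) (act (pderiv_var j f) (act (f ^ k) y)) = 0"
    using m k dop_zero[OF j] by simp
  then have "act (pderiv_var j f) (act (f ^ k) y) = 0"
    by (metis scale_scale scale_one scale_zero_right of_nat_neq_0 left_inverse)
  then show ?thesis
    using prime_ann_in_mem_if_kills[OF P nz pderiv_var_polys_in[OF fR]] by blast
qed

end

theorem theorem7p1:
  fixes n :: nat
    and scale :: "'k::field_char_0 \<Rightarrow> 'm::ab_group_add \<Rightarrow> 'm"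
    and xop dop :: "nat \<Rightarrow> 'm \<Rightarrow> 'm"
    and P :: "'k mpoly set"
  assumes "n \<ge> 1"
    and "simple_weyl_module n scale xop dop"
    and "Ass_in n scale xop = {P}"
  defines "Q \<equiv> P \<inter> polys_in (n - 1)"
  shows "(range (dop (n - 1)) = UNIV \<longrightarrow> P = ideal_gen_in n Q)
       \<and> ((\<exists>v. v \<noteq> 0 \<and> dop (n - 1) v = 0) \<longrightarrow> P = ideal_gen_in n Q)"
proof -
  obtain k where n: "n = Suc k"
    using assms(1) by (cases n) auto
  interpret simple_weyl_mod n scale xop dop
    by unfold_locales (rule assms(2))
  obtain v where P: "prime_ideal_in n P" "P = ann_in n scale xop v"
    using assms(3) unfolding Ass_in_def by blast
  have extended: "P = ideal_gen_in n Q"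
    if "y \<noteq> 0" and "P \<subseteq> ann_in n scale xop (dop k y)" for y
  proof -
    have "\<forall>f\<in>P. pderiv_var k f \<in> P"
      using pderiv_var_mem_prime_ann_in[OF P _ that] n by simp
    then show ?thesis
      using pderiv_closed_ideal_eq_ideal_gen[of k P] P(1)
      unfolding Q_def n prime_ideal_in_def by simp
  qed
  show ?thesis
  proof (intro conjI impI)
    assume "range (dop (n - 1)) = UNIV"
    then obtain u where "dop k u = v"
      using n by (metis UNIV_I diff_Suc_1 image_iff)
    with ann_in_prime_nonzero[OF P] show "P = ideal_gen_in n Q"
      using extended[of u] P(2) dop_zero n by force
  next
    assume "\<exists>y. y \<noteq> 0 \<and> dop (n - 1) y = 0"
    with P(1) show "P = ideal_gen_in n Q"
      using extended ann_in_zero n unfolding prime_ideal_in_def ideal_in_def by auto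
  qed
qed

end
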